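(* Consider a Fragile multi-CPR Game with $n\ge1$ players and $m\ge1$ CPRs satisfying the Assumption below, with constraint policies $\vartheta_i$ as below. Then there exists at most one Generalized Nash equilibrium $\mathbf{x}=(\mathbf{x}_1,\dots,\mathbf{x}_n)$ for which $\mathbf{x}_i$ is of Type I for all $i\in[n]$.
   Context: Let $[k]=\{1,\dots,k\}$, $C_m=\{(x_1,\dots,x_m)\in[0,1]^m:\sum_j x_j\le1\}$, $\mathcal{C}_n=\prod_{i\in[n]}C_m$, $\mathcal{C}_{-i}=\prod_{[n]\setminus\{i\}}C_m$. A profile is $\mathbf{x}=(\mathbf{x}_1,\dots,\mathbf{x}_n)\in\mathcal{C}_n$, $\mathbf{x}_i=(x_{i1},\dots,x_{im})$; write $\mathbf{x}=(\mathbf{x}_i,\mathbf{x}_{-i})$. Put $\mathbf{x}_T^{(j)}=\sum_i x_{ij}$, $\mathbf{x}_T^{j|i}=\sum_{\ell\ne i}x_{\ell j}$. Each CPR $j$ has a return rate $\mathcal{R}_j(t)>1$ and failure probability $p_j(t)\in[0,1]$; each player $i$ has parameters $a_i,k_i$. Effective rate: $\mathcal{F}_{ij}(t)=(\mathcal{R}_j(t)-1)^{a_i}(1-p_j(t))-k_ip_j(t)$; utility $\mathcal{V}_i(\mathbf{x}_i;\mathbf{x}_{-i})=\sum_j x_{ij}^{a_i}\mathcal{F}_{ij}(\mathbf{x}_T^{(j)})$. Assumption: (1) $p_j(0)=0$, $p_j(t)=1$ for $t\ge1$; (2) $a_i\in(0,1]$, $k_i>0$; (3) each $\mathcal{F}_{ij}$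 (continuous on $[0,1]$) has strictly negative first and second derivatives on $(0,1)$. Let $\omega_{ij}\in(0,1)$ be the unique zero of $\mathcal{F}_{ij}$ in $(0,1)$. Active CPRs: $A(\mathbf{x}_{-i})=\{j:\mathbf{x}_T^{j|i}<\omega_{ij}\}$. Constraint policy: $\vartheta_i(\mathbf{x}_{-i})=C_m\cap\big(\prod_{j\in A(\mathbf{x}_{-i})}[0,\omega_{ij}-\mathbf{x}_T^{j|i}]\times\prod_{j\notin A(\mathbf{x}_{-i})}\{0\}\big)$. A Generalized Nash equilibrium (GNE) is $\mathbf{x}\in\mathcal{C}_n$ with, for all $i$, $\mathbf{x}_i\in\vartheta_i(\mathbf{x}_{-i})$ and $\mathcal{V}_i(\mathbf{x}_i;\mathbf{x}_{-i})\ge\mathcal{V}_i(\mathbf{y};\mathbf{x}_{-i})$ for all $\mathbf{y}\in\vartheta_i(\mathbf{x}_{-i})$. Let $\psi_{ij}(x;s)=x\,\mathcal{F}_{ij}'(x+s)+a_i\mathcal{F}_{ij}(x+s)$. For a GNE $\mathbf{x}$ and $i\in[n]$, let $J_{\mathbf{x}_{-i}}=\{j\in A(\mathbf{x}_{-i}):x_{ij}\ne0\}$. Then $\mathbf{x}_i$ is of Type I if $\sum_{j\in J_{\mathbf{x}_{-i}}}x_{ij}<1$ and $\psi_{ij}(x_{ij};\mathbf{x}_T^{j|i})=0$ for all $j\in J_{\mathbf{x}_{-i}}$; it is of Type II if $\sum_{j\in J_{\mathbf{x}_{-i}}}x_{ij}=1$ and there is $\kappa_0\ge0$ with $x_{ij}^{a_i-1}\psi_{ij}(x_{ij};\mathbf{x}_T^{j|i})=\kappa_0$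 for all $j\in J_{\mathbf{x}_{-i}}$. *)

theory Defs
  imports "HOL-Analysis.Analysis"
begin

text \<open>Players are indexed by {1..n}, CPRs by {1..m}.
  R j t: return rate of CPR j; p j t: failure probability of CPR j;
  a i, k i: parameters of player i. A profile is x :: nat => nat => real,
  x i j being the investment of player i in CPR j.\<close>

definition Feff :: "(nat \<Rightarrow> real \<Rightarrow> real) \<Rightarrow> (nat \<Rightarrow> real \<Rightarrow> real) \<Rightarrow> (nat \<Rightarrow> real) \<Rightarrow> (nat \<Rightarrow> real)
    \<Rightarrow> nat \<Rightarrow> nat \<Rightarrow> real \<Rightarrow> real" where
  "Feff R p a k i j t = (R j t - 1) powr (a i) * (1 - p j t) - k i * p j t"

definition omega :: "(nat \<Rightarrow> real \<Rightarrow> real) \<Rightarrow> (nat \<Rightarrow> real \<Rightarrow> real) \<Rightarrow> (nat \<Rightarrow> real) \<Rightarrow> (nat \<Rightarrow> real)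
    \<Rightarrow> nat \<Rightarrow> nat \<Rightarrow> real" where
  "omega R p a k i j = (THE w. w \<in> {0<..<1} \<and> Feff R p a k i j w = 0)"

definition Cm :: "nat \<Rightarrow> (nat \<Rightarrow> real) set" where
  "Cm m = {v. (\<forall>j\<in>{1..m}. 0 \<le> v j \<and> v j \<le> 1) \<and> (\<Sum>j=1..m. v j) \<le> 1}"

definition xT_minus :: "nat \<Rightarrow> (nat \<Rightarrow> nat \<Rightarrow> real) \<Rightarrow> nat \<Rightarrow> nat \<Rightarrow> real" where
  "xT_minus n x i j = (\<Sum>l\<in>{1..n} - {i}. x l j)"

definition util :: "(nat \<Rightarrow> real \<Rightarrow> real) \<Rightarrow> (nat \<Rightarrow> real \<Rightarrow> real) \<Rightarrow> (nat \<Rightarrow> real) \<Rightarrow> (nat \<Rightarrow> real)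
    \<Rightarrow> nat \<Rightarrow> nat \<Rightarrow> nat \<Rightarrow> (nat \<Rightarrow> real) \<Rightarrow> (nat \<Rightarrow> nat \<Rightarrow> real) \<Rightarrow> real" where
  "util R p a k n m i v x = (\<Sum>j=1..m. v j powr (a i) * Feff R p a k i j (v j + xT_minus n x i j))"

definition active :: "(nat \<Rightarrow> real \<Rightarrow> real) \<Rightarrow> (nat \<Rightarrow> real \<Rightarrow> real) \<Rightarrow> (nat \<Rightarrow> real) \<Rightarrow> (nat \<Rightarrow> real)
    \<Rightarrow> nat \<Rightarrow> nat \<Rightarrow> nat \<Rightarrow> (nat \<Rightarrow> nat \<Rightarrow> real) \<Rightarrow> nat set" where
  "active R p a k n m i x = {j \<in> {1..m}. xT_minus n x i j < omega R p a k i j}"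

definition policy :: "(nat \<Rightarrow> real \<Rightarrow> real) \<Rightarrow> (nat \<Rightarrow> real \<Rightarrow> real) \<Rightarrow> (nat \<Rightarrow> real) \<Rightarrow> (nat \<Rightarrow> real)
    \<Rightarrow> nat \<Rightarrow> nat \<Rightarrow> nat \<Rightarrow> (nat \<Rightarrow> nat \<Rightarrow> real) \<Rightarrow> (nat \<Rightarrow> real) set" where
  "policy R p a k n m i x = {v \<in> Cm m. \<forall>j\<in>{1..m}.
      (j \<in> active R p a k n m i x \<longrightarrow> 0 \<le> v j \<and> v j \<le> omega R p a k i j - xT_minus n x i j) \<and>
      (j \<notin> active R p a k n m i x \<longrightarrow> v j = 0)}"

definition is_GNE :: "(nat \<Rightarrow> real \<Rightarrow> real) \<Rightarrow> (nat \<Rightarrow> real \<Rightarrow> real) \<Rightarrow> (nat \<Rightarrow> real) \<Rightarrow> (nat \<Rightarrow> real)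
    \<Rightarrow> nat \<Rightarrow> nat \<Rightarrow> (nat \<Rightarrow> nat \<Rightarrow> real) \<Rightarrow> bool" where
  "is_GNE R p a k n m x \<longleftrightarrow> (\<forall>i\<in>{1..n}. x i \<in> Cm m) \<and>
     (\<forall>i\<in>{1..n}. x i \<in> policy R p a k n m i x \<and>
        (\<forall>y\<in>policy R p a k n m i x. util R p a k n m i (x i) x \<ge> util R p a k n m i y x))"

definition psi :: "(nat \<Rightarrow> real \<Rightarrow> real) \<Rightarrow> (nat \<Rightarrow> real \<Rightarrow> real) \<Rightarrow> (nat \<Rightarrow> real) \<Rightarrow> (nat \<Rightarrow> real)
    \<Rightarrow> nat \<Rightarrow> nat \<Rightarrow> real \<Rightarrow> real \<Rightarrow> real" where
  "psi R p a k i j y s = y * deriv (Feff R p a k i j) (y + s) + a i * Feff R p a k i j (y + s)"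

definition Jset :: "(nat \<Rightarrow> real \<Rightarrow> real) \<Rightarrow> (nat \<Rightarrow> real \<Rightarrow> real) \<Rightarrow> (nat \<Rightarrow> real) \<Rightarrow> (nat \<Rightarrow> real)
    \<Rightarrow> nat \<Rightarrow> nat \<Rightarrow> nat \<Rightarrow> (nat \<Rightarrow> nat \<Rightarrow> real) \<Rightarrow> nat set" where
  "Jset R p a k n m i x = {j \<in> active R p a k n m i x. x i j \<noteq> 0}"

definition typeI :: "(nat \<Rightarrow> real \<Rightarrow> real) \<Rightarrow> (nat \<Rightarrow> real \<Rightarrow> real) \<Rightarrow> (nat \<Rightarrow> real) \<Rightarrow> (nat \<Rightarrow> real)
    \<Rightarrow> nat \<Rightarrow> nat \<Rightarrow> nat \<Rightarrow> (nat \<Rightarrow> nat \<Rightarrow> real) \<Rightarrow> bool" where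
  "typeI R p a k n m i x \<longleftrightarrow>
     (\<Sum>j\<in>Jset R p a k n m i x. x i j) < 1 \<and>
     (\<forall>j\<in>Jset R p a k n m i x. psi R p a k i j (x i j) (xT_minus n x i j) = 0)"

definition fragile_assumption :: "(nat \<Rightarrow> real \<Rightarrow> real) \<Rightarrow> (nat \<Rightarrow> real \<Rightarrow> real) \<Rightarrow> (nat \<Rightarrow> real) \<Rightarrow> (nat \<Rightarrow> real)
    \<Rightarrow> nat \<Rightarrow> nat \<Rightarrow> bool" where
  "fragile_assumption R p a k n m \<longleftrightarrow>
     (\<forall>j\<in>{1..m}. \<forall>t\<ge>0. R j t > 1 \<and> 0 \<le> p j t \<and> p j t \<le> 1) \<and>
     (\<forall>j\<in>{1..m}. p j 0 = 0 \<and> (\<forall>t\<ge>1. p j t = 1)) \<and>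
     (\<forall>i\<in>{1..n}. 0 < a i \<and> a i \<le> 1 \<and> 0 < k i) \<and>
     (\<forall>i\<in>{1..n}. \<forall>j\<in>{1..m}.
        continuous_on {0..1} (Feff R p a k i j) \<and>
        (\<exists>F' F''. \<forall>t\<in>{0<..<1}. (Feff R p a k i j has_real_derivative F' t) (at t) \<and>
            (F' has_real_derivative F'' t) (at t) \<and> F' t < 0 \<and> F'' t < 0))"

end

theory Submission
  imports Defs
begin

(* In a Type I equilibrium every player's budget constraint is slack, so player i
   invests in CPR j exactly when the total load X_j stays below omega_ij (otherwise a small
   deviation into j would pay off), and then the first-order condition psi = 0 determines
   x_ij = a_i F_ij(X_j) / -F_ij'(X_j). Since F_ij is positive, decreasing and concave
   below omega_ij, this share is a nonincreasing function of X_j. Hence X_j is a fixed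
   point of a nonincreasing map, which has at most one fixed point, and the loads and then
   all investments of two Type I equilibria coincide. *)

lemma sum_fun_upd:
  fixes h :: "'a \<Rightarrow> 'b \<Rightarrow> 'c::ab_group_add"
  assumes "finite A" "j \<in> A"
  shows "(\<Sum>l\<in>A. h l ((v(j := e)) l)) = (\<Sum>l\<in>A. h l (v l)) - h j (v j) + h j e"
proof -
  have "(\<Sum>l\<in>A. h l ((v(j := e)) l)) = h j e + (\<Sum>l\<in>A - {j}. h l (v l))"
    using assms by (simp add: sum.remove)
  also have "\<dots> = (\<Sum>l\<in>A. h l (v l)) - h j (v j) + h j e"
    using assms by (simp add: sum.remove)
  finally show ?thesis .
qed

lemma antimono_on_fixpoint_unique:
  fixes g :: "'a::linorder \<Rightarrow> 'a"
  assumes "antimono_on S g" "s \<in> S" "t \<in> S" "g s = s" "g t = t"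
  shows "s = t"
  using assms by (metis linorder_linear monotone_onD order_antisym)

lemma decreasing_of_neg_deriv:
  fixes f f' :: "real \<Rightarrow> real"
  assumes "continuous_on {a..b} f"
    and "\<And>t. t \<in> {a<..<b} \<Longrightarrow> (f has_real_derivative f' t) (at t) \<and> f' t < 0"
    and "a \<le> s" "s < t" "t \<le> b"
  shows "f t < f s"
proof (rule DERIV_neg_imp_decreasing_open[OF \<open>s < t\<close>])
  show "\<exists>y. (f has_real_derivative y) (at z) \<and> y < 0" if "s < z" "z < t" for z
    using assms(2)[of z] that assms(3,5) by auto
  show "continuous_on {s..t} f"
    using assms(1) by (rule continuous_on_subset) (use assms(3,5) in auto)
qed

lemma deriv_decreasing_of_neg_second_deriv:
  fixes f f' f'' :: "real \<Rightarrow> real"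
  assumes "\<And>t. t \<in> {a<..<b} \<Longrightarrow>
      (f has_real_derivative f' t) (at t) \<and> (f' has_real_derivative f'' t) (at t) \<and> f'' t < 0"
    and "a < s" "s < t" "t < b"
  shows "deriv f t < deriv f s"
proof -
  have "continuous_on {s..t} f'"
  proof (intro continuous_at_imp_continuous_on ballI)
    fix z assume "z \<in> {s..t}"
    then have "(f' has_real_derivative f'' z) (at z)"
      using assms by auto
    then show "isCont f' z" by (rule DERIV_isCont)
  qed
  then have "f' t < f' s"
    by (rule decreasing_of_neg_deriv[of s t f' f'']) (use assms in auto)
  moreover have "deriv f t = f' t" "deriv f s = f' s"
    using assms by (auto intro: DERIV_imp_deriv)
  ultimately show ?thesis by simp
qed

lemma ratio_to_neg_deriv_antimono:
  fixes f f' f'' :: "real \<Rightarrow> real"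
  assumes D: "\<And>t. t \<in> {a<..<b} \<Longrightarrow> (f has_real_derivative f' t) (at t) \<and>
      (f' has_real_derivative f'' t) (at t) \<and> f' t < 0 \<and> f'' t < 0"
    and "a < s" "s \<le> t" "t < b" "0 \<le> f t"
  shows "f t / - deriv f t \<le> f s / - deriv f s"
proof (cases "s = t")
  case False
  then have "s < t" using assms by simp
  have "f t < f s"
  proof (rule DERIV_neg_imp_decreasing[OF \<open>s < t\<close>])
    fix z assume "s \<le> z" "z \<le> t"
    then have "z \<in> {a<..<b}" using assms by auto
    then show "\<exists>y. (f has_real_derivative y) (at z) \<and> y < 0" using D by blast
  qed
  moreover have "deriv f t < deriv f s"
    by (rule deriv_decreasing_of_neg_second_deriv[OF _ _ \<open>s < t\<close>]) (use D assms in auto)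
  moreover have "deriv f s < 0"
  proof -
    have "s \<in> {a<..<b}" using assms by auto
    with D have "(f has_real_derivative f' s) (at s)" "f' s < 0" by auto
    then show ?thesis by (simp add: DERIV_imp_deriv)
  qed
  ultimately show ?thesis
    by (intro frac_le) (use assms in auto)
qed simp

lemma unique_zero_of_decreasing:
  fixes f :: "real \<Rightarrow> real"
  assumes "a < b" "continuous_on {a..b} f" "0 < f a" "f b < 0"
    and dec: "\<And>s t. a \<le> s \<Longrightarrow> s < t \<Longrightarrow> t \<le> b \<Longrightarrow> f t < f s"
  shows "\<exists>!w. w \<in> {a<..<b} \<and> f w = 0"
proof -
  obtain w where w: "a \<le> w" "w \<le> b" "f w = 0"
    using IVT2'[of f b 0 a] assms by auto
  then have "w \<in> {a<..<b}"
    using assms by (auto simp: order.order_iff_strict)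
  moreover have "v = w" if "v \<in> {a<..<b}" "f v = 0" for v
    using dec[of v w] dec[of w v] that w by (cases v w rule: linorder_cases) auto
  ultimately show ?thesis
    using w by blast
qed

lemma fragile_assumptionD:
  assumes "fragile_assumption R p a k n m" "i \<in> {1..n}" "j \<in> {1..m}"
  shows "0 < a i" "continuous_on {0..1} (Feff R p a k i j)"
    and "0 < Feff R p a k i j 0" "Feff R p a k i j 1 < 0"
    and "\<exists>F' F''. \<forall>t\<in>{0<..<1}. (Feff R p a k i j has_real_derivative F' t) (at t) \<and>
      (F' has_real_derivative F'' t) (at t) \<and> F' t < 0 \<and> F'' t < 0"
proof -
  have "1 < R j 0" "p j 0 = 0" "p j 1 = 1" "0 < k i"
    using assms unfolding fragile_assumption_def by auto
  then show "0 < Feff R p a k i j 0" "Feff R p a k i j 1 < 0"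
    by (simp_all add: Feff_def)
  show "0 < a i" "continuous_on {0..1} (Feff R p a k i j)"
    and "\<exists>F' F''. \<forall>t\<in>{0<..<1}. (Feff R p a k i j has_real_derivative F' t) (at t) \<and>
      (F' has_real_derivative F'' t) (at t) \<and> F' t < 0 \<and> F'' t < 0"
    using assms unfolding fragile_assumption_def by auto
qed

abbreviation load :: "nat \<Rightarrow> (nat \<Rightarrow> nat \<Rightarrow> real) \<Rightarrow> nat \<Rightarrow> real" where
  "load n x j \<equiv> \<Sum>l=1..n. x l j"

(* The investment solving the Type I first-order condition psi_ij(x; X - x) = 0 at total load X. *)
definition share :: "(nat \<Rightarrow> real \<Rightarrow> real) \<Rightarrow> (nat \<Rightarrow> real \<Rightarrow> real) \<Rightarrow> (nat \<Rightarrow> real) \<Rightarrow> (nat \<Rightarrow> real)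
    \<Rightarrow> nat \<Rightarrow> nat \<Rightarrow> real \<Rightarrow> real" where
  "share R p a k i j t = (if t < omega R p a k i j
     then a i * Feff R p a k i j t / - deriv (Feff R p a k i j) t else 0)"

lemma GNE_bounds:
  assumes "is_GNE R p a k n m x" "l \<in> {1..n}" "j \<in> {1..m}"
  shows "0 \<le> x l j" "x l j \<le> 1"
  using assms unfolding is_GNE_def Cm_def by auto

lemma GNE_xT_minus_nonneg:
  assumes "is_GNE R p a k n m x" "j \<in> {1..m}"
  shows "0 \<le> xT_minus n x i j"
  unfolding xT_minus_def using GNE_bounds[OF assms(1) _ assms(2)] by (intro sum_nonneg) auto

lemma load_eq_own_plus_xT_minus:
  assumes "i \<in> {1..n}"
  shows "load n x j = x i j + xT_minus n x i j"
  unfolding xT_minus_def using assms by (simp add: sum.remove)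

lemma GNE_policy:
  assumes "is_GNE R p a k n m x" "i \<in> {1..n}" "j \<in> {1..m}"
  shows "j \<in> active R p a k n m i x \<Longrightarrow> x i j \<le> omega R p a k i j - xT_minus n x i j"
    and "j \<notin> active R p a k n m i x \<Longrightarrow> x i j = 0"
  using assms unfolding is_GNE_def policy_def by auto

lemma typeI_budget_slack:
  assumes "is_GNE R p a k n m x" "typeI R p a k n m i x" "i \<in> {1..n}"
  shows "(\<Sum>j=1..m. x i j) < 1"
proof -
  have "(\<Sum>j=1..m. x i j) = (\<Sum>j\<in>Jset R p a k n m i x. x i j)"
    by (rule sum.mono_neutral_right)
      (use GNE_policy(2)[OF assms(1,3)] in \<open>fastforce simp: Jset_def active_def\<close>)+
  then show ?thesis
    using assms(2) unfolding typeI_def by simp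
qed

lemma policy_fun_upd:
  assumes v: "v \<in> policy R p a k n m i x" and j: "j \<in> active R p a k n m i x"
    and e: "0 \<le> e" "e \<le> omega R p a k i j - xT_minus n x i j"
    and budget: "(\<Sum>l=1..m. v l) - v j + e \<le> 1"
  shows "v(j := e) \<in> policy R p a k n m i x"
proof -
  have jm: "j \<in> {1..m}" using j unfolding active_def by simp
  have "v \<in> Cm m" using v unfolding policy_def by simp
  then have "0 \<le> (\<Sum>l\<in>{1..m} - {j}. v l)"
    unfolding Cm_def by (intro sum_nonneg) auto
  then have "e \<le> 1"
    using budget jm by (simp add: sum.remove)
  moreover have "(\<Sum>l=1..m. (v(j := e)) l) \<le> 1"
    using sum_fun_upd[of "{1..m}" j "\<lambda>_ z. z" v e] jm budget by simp
  ultimately show ?thesis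
    using v j e unfolding policy_def Cm_def by auto
qed

lemma util_fun_upd:
  assumes "j \<in> {1..m}"
  shows "util R p a k n m i (v(j := e)) x = util R p a k n m i v x
    - v j powr a i * Feff R p a k i j (v j + xT_minus n x i j)
    + e powr a i * Feff R p a k i j (e + xT_minus n x i j)"
  unfolding util_def
  using sum_fun_upd[of "{1..m}" j "\<lambda>l z. z powr a i * Feff R p a k i l (z + xT_minus n x i l)" v e]
    assms by simp

context
  fixes R p :: "nat \<Rightarrow> real \<Rightarrow> real" and a k :: "nat \<Rightarrow> real" and n m :: nat
  assumes fragile: "fragile_assumption R p a k n m"
begin

lemma Feff_decreasing:
  assumes "i \<in> {1..n}" "j \<in> {1..m}" "0 \<le> s" "s < t" "t \<le> 1"
  shows "Feff R p a k i j t < Feff R p a k i j s"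
proof -
  obtain F' F'' where D: "\<forall>t\<in>{0<..<1}. (Feff R p a k i j has_real_derivative F' t) (at t) \<and>
      (F' has_real_derivative F'' t) (at t) \<and> F' t < 0 \<and> F'' t < 0"
    using fragile_assumptionD(5)[OF fragile assms(1,2)] by blast
  show ?thesis
  proof (rule decreasing_of_neg_deriv[OF fragile_assumptionD(2)[OF fragile assms(1,2)]])
    show "(Feff R p a k i j has_real_derivative F' u) (at u) \<and> F' u < 0" if "u \<in> {0<..<1}" for u
      using D that by blast
  qed (use assms in auto)
qed

lemma deriv_Feff_neg:
  assumes "i \<in> {1..n}" "j \<in> {1..m}" "0 < t" "t < 1"
  shows "deriv (Feff R p a k i j) t < 0"
proof -
  obtain F' F'' where "\<forall>t\<in>{0<..<1}. (Feff R p a k i j has_real_derivative F' t) (at t) \<and>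
      (F' has_real_derivative F'' t) (at t) \<and> F' t < 0 \<and> F'' t < 0"
    using fragile_assumptionD(5)[OF fragile assms(1,2)] by blast
  then have "(Feff R p a k i j has_real_derivative F' t) (at t)" "F' t < 0"
    using assms(3,4) by auto
  then show ?thesis by (simp add: DERIV_imp_deriv)
qed

lemma omega_zero:
  assumes "i \<in> {1..n}" "j \<in> {1..m}"
  shows "omega R p a k i j \<in> {0<..<1}" "Feff R p a k i j (omega R p a k i j) = 0"
proof -
  have "\<exists>!w. w \<in> {0<..<1} \<and> Feff R p a k i j w = 0"
  proof (rule unique_zero_of_decreasing)
    show "\<And>s t. 0 \<le> s \<Longrightarrow> s < t \<Longrightarrow> t \<le> 1 \<Longrightarrow> Feff R p a k i j t < Feff R p a k i j s"
      by (rule Feff_decreasing[OF assms])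
  qed (use fragile_assumptionD(2-4)[OF fragile assms] in auto)
  from theI'[OF this] show "omega R p a k i j \<in> {0<..<1}" "Feff R p a k i j (omega R p a k i j) = 0"
    unfolding omega_def by blast+
qed

lemma Feff_pos_iff:
  assumes "i \<in> {1..n}" "j \<in> {1..m}" "0 \<le> t" "t \<le> 1"
  shows "0 < Feff R p a k i j t \<longleftrightarrow> t < omega R p a k i j"
proof -
  let ?F = "Feff R p a k i j" and ?w = "omega R p a k i j"
  have w: "0 < ?w" "?w < 1" "?F ?w = 0" using omega_zero[OF assms(1,2)] by auto
  show ?thesis
  proof (cases t ?w rule: linorder_cases)
    case less
    then show ?thesis using Feff_decreasing[OF assms(1,2), of t ?w] w assms(3) by simp
  next
    case greater
    then show ?thesis using Feff_decreasing[OF assms(1,2), of ?w t] w assms(4) by simp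
  qed (use w in simp)
qed

lemma share_antimono:
  assumes "i \<in> {1..n}" "j \<in> {1..m}"
  shows "antimono_on {0<..} (share R p a k i j)"
proof (rule monotone_onI)
  fix s t :: real assume st: "s \<in> {0<..}" "t \<in> {0<..}" "s \<le> t"
  let ?F = "Feff R p a k i j" and ?w = "omega R p a k i j"
  have a: "0 < a i" using fragile_assumptionD(1)[OF fragile assms] .
  have w: "?w < 1" using omega_zero(1)[OF assms] by simp
  show "share R p a k i j t \<le> share R p a k i j s"
  proof (cases "t < ?w")
    case True
    obtain F' F'' where "\<forall>t\<in>{0<..<1}. (?F has_real_derivative F' t) (at t) \<and>
        (F' has_real_derivative F'' t) (at t) \<and> F' t < 0 \<and> F'' t < 0"
      using fragile_assumptionD(5)[OF fragile assms] by blast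
    moreover have "0 \<le> ?F t" using Feff_pos_iff[OF assms, of t] True w st by simp
    ultimately have "?F t / - deriv ?F t \<le> ?F s / - deriv ?F s"
      using True w st by (intro ratio_to_neg_deriv_antimono[of 0 1 _ F' F'']) auto
    then have "a i * (?F t / - deriv ?F t) \<le> a i * (?F s / - deriv ?F s)"
      by (rule mult_left_mono) (use a in simp)
    then show ?thesis
      using True st unfolding share_def by simp
  next
    case False
    have "0 \<le> share R p a k i j s"
    proof (cases "s < ?w")
      case True
      then have "0 < ?F s" "deriv ?F s < 0"
        using Feff_pos_iff[OF assms, of s] deriv_Feff_neg[OF assms, of s] w st by auto
      then show ?thesis
        using True a unfolding share_def by (simp add: divide_nonneg_neg)
    qed (simp add: share_def)
    then show ?thesis
      using False unfolding share_def by simp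
  qed
qed

lemma GNE_typeI_invests_in_active:
  assumes G: "is_GNE R p a k n m x" and T: "typeI R p a k n m i x" and i: "i \<in> {1..n}"
    and act: "j \<in> active R p a k n m i x"
  shows "x i j \<noteq> 0"
proof
  assume x0: "x i j = 0"
  \<comment> \<open>Type I leaves budget slack, so moving a little money into CPR j is feasible and profitable.\<close>
  define s where "s = xT_minus n x i j"
  define w where "w = omega R p a k i j"
  define S where "S = (\<Sum>l=1..m. x i l)"
  have j: "j \<in> {1..m}" and "s < w"
    using act unfolding active_def s_def w_def by auto
  have "S < 1" "0 \<le> s" "w < 1"
    using typeI_budget_slack[OF G T i] GNE_xT_minus_nonneg[OF G j] omega_zero(1)[OF i j]
    unfolding S_def s_def w_def by auto
  have xP: "x i \<in> policy R p a k n m i x"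
    and opt: "\<forall>v\<in>policy R p a k n m i x. util R p a k n m i v x \<le> util R p a k n m i (x i) x"
    using G i unfolding is_GNE_def by auto
  define e where "e = min ((w - s) / 2) ((1 - S) / 2)"
  have "e \<le> (w - s) / 2" "e \<le> (1 - S) / 2"
    unfolding e_def by (rule min.cobounded1, rule min.cobounded2)
  moreover have "0 < e"
    using \<open>s < w\<close> \<open>S < 1\<close> unfolding e_def by simp
  ultimately have e: "0 < e" "e < w - s" "S - x i j + e \<le> 1"
    using \<open>s < w\<close> \<open>S < 1\<close> x0 by auto
  have "(x i)(j := e) \<in> policy R p a k n m i x"
    by (rule policy_fun_upd[OF xP act]) (use e in \<open>simp_all add: S_def s_def w_def\<close>)
  then have "util R p a k n m i ((x i)(j := e)) x \<le> util R p a k n m i (x i) x"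
    using opt by blast
  moreover have "0 < Feff R p a k i j (e + s)"
    using Feff_pos_iff[OF i j, of "e + s"] e \<open>0 \<le> s\<close> \<open>w < 1\<close> unfolding w_def by simp
  then have "0 < e powr a i * Feff R p a k i j (e + s)"
    using e by simp
  ultimately show False
    using util_fun_upd[OF j, of R p a k n i "x i" e x] x0 unfolding s_def by simp
qed

lemma GNE_typeI_first_order:
  assumes G: "is_GNE R p a k n m x" and T: "typeI R p a k n m i x"
    and i: "i \<in> {1..n}" and j: "j \<in> {1..m}" and pos: "0 < x i j"
  shows "load n x j < omega R p a k i j"
    and "x i j * - deriv (Feff R p a k i j) (load n x j) = a i * Feff R p a k i j (load n x j)"
proof -
  let ?F = "Feff R p a k i j" and ?X = "load n x j"
  have act: "j \<in> active R p a k n m i x"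
    using GNE_policy(2)[OF G i j] pos by auto
  have X: "?X = x i j + xT_minus n x i j"
    by (rule load_eq_own_plus_xT_minus[OF i])
  have "0 < ?X" "?X \<le> omega R p a k i j"
    using X pos GNE_xT_minus_nonneg[OF G j, of i] GNE_policy(1)[OF G i j act] by auto
  then have X01: "0 < ?X" "?X < 1"
    using omega_zero(1)[OF i j] by auto
  have "j \<in> Jset R p a k n m i x"
    unfolding Jset_def using act pos by simp
  then have "x i j * deriv ?F ?X + a i * ?F ?X = 0"
    using T X unfolding typeI_def psi_def by simp
  then show first_order: "x i j * - deriv ?F ?X = a i * ?F ?X"
    by simp
  have "0 < x i j * - deriv ?F ?X"
    using pos deriv_Feff_neg[OF i j X01] by (simp add: mult_pos_neg)
  then have "0 < a i * ?F ?X"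
    by (simp only: first_order)
  then have "0 < ?F ?X"
    using fragile_assumptionD(1)[OF fragile i j] by (simp add: zero_less_mult_iff)
  then show "?X < omega R p a k i j"
    using Feff_pos_iff[OF i j] X01 by simp
qed

lemma GNE_typeI_eq_share:
  assumes G: "is_GNE R p a k n m x" and T: "typeI R p a k n m i x"
    and i: "i \<in> {1..n}" and j: "j \<in> {1..m}"
  shows "x i j = share R p a k i j (load n x j)"
proof (cases "0 < x i j")
  case True
  let ?F = "Feff R p a k i j" and ?X = "load n x j"
  have "0 < ?X" "?X < 1"
    using True GNE_typeI_first_order(1)[OF G T i j True] omega_zero(1)[OF i j]
      load_eq_own_plus_xT_minus[OF i, of x j] GNE_xT_minus_nonneg[OF G j, of i] by auto
  then have "- deriv ?F ?X \<noteq> 0"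
    using deriv_Feff_neg[OF i j] by fastforce
  then have "a i * ?F ?X / - deriv ?F ?X = x i j"
    using GNE_typeI_first_order(2)[OF G T i j True] by (metis nonzero_mult_div_cancel_right)
  then show ?thesis
    using GNE_typeI_first_order(1)[OF G T i j True] unfolding share_def by simp
next
  case False
  then have x0: "x i j = 0"
    using GNE_bounds(1)[OF G i j] by simp
  have "\<not> load n x j < omega R p a k i j"
  proof
    assume "load n x j < omega R p a k i j"
    then have "j \<in> active R p a k n m i x"
      using j x0 load_eq_own_plus_xT_minus[OF i, of x j] unfolding active_def by simp
    then show False
      using GNE_typeI_invests_in_active[OF G T i] x0 by blast
  qed
  then show ?thesis
    using x0 unfolding share_def by simp
qed

lemma GNE_typeI_load_pos:
  assumes G: "is_GNE R p a k n m x" and T: "\<forall>i\<in>{1..n}. typeI R p a k n m i x"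
    and "n \<ge> 1" and j: "j \<in> {1..m}"
  shows "0 < load n x j"
proof (rule ccontr)
  assume "\<not> 0 < load n x j"
  moreover have nonneg: "\<forall>l\<in>{1..n}. 0 \<le> x l j"
    using GNE_bounds(1)[OF G _ j] by blast
  ultimately have "load n x j = 0"
    using sum_nonneg[of "{1..n}" "\<lambda>l. x l j"] by simp
  then have "\<forall>l\<in>{1..n}. x l j = 0"
    using nonneg sum_nonneg_eq_0_iff[of "{1..n}" "\<lambda>l. x l j"] by simp
  moreover have one: "1 \<in> {1..n}" using \<open>n \<ge> 1\<close> by simp
  ultimately have "j \<in> active R p a k n m 1 x"
    using \<open>load n x j = 0\<close> load_eq_own_plus_xT_minus[OF one, of x j] omega_zero(1)[OF one j] j
    unfolding active_def by simp
  then show False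
    using GNE_typeI_invests_in_active[OF G _ one] T one \<open>\<forall>l\<in>{1..n}. x l j = 0\<close> by blast
qed

lemma share_sum_antimono:
  assumes "j \<in> {1..m}"
  shows "antimono_on {0<..} (\<lambda>t. \<Sum>l=1..n. share R p a k l j t)"
proof (rule monotone_onI)
  fix s t :: real assume "s \<in> {0<..}" "t \<in> {0<..}" "s \<le> t"
  then show "(\<Sum>l=1..n. share R p a k l j t) \<le> (\<Sum>l=1..n. share R p a k l j s)"
    using share_antimono[OF _ assms] by (intro sum_mono) (simp add: monotone_on_def)
qed

end

theorem theorem9:
  fixes R p :: "nat \<Rightarrow> real \<Rightarrow> real" and a k :: "nat \<Rightarrow> real" and n m :: nat
    and x y :: "nat \<Rightarrow> nat \<Rightarrow> real"
  assumes "n \<ge> 1" and "m \<ge> 1"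
    and "fragile_assumption R p a k n m"
    and "is_GNE R p a k n m x" and "\<forall>i\<in>{1..n}. typeI R p a k n m i x"
    and "is_GNE R p a k n m y" and "\<forall>i\<in>{1..n}. typeI R p a k n m i y"
  shows "\<forall>i\<in>{1..n}. \<forall>j\<in>{1..m}. x i j = y i j"
proof (intro ballI)
  note fragile = assms(3)
  fix i j assume i: "i \<in> {1..n}" and j: "j \<in> {1..m}"
  have fixpoint: "(\<Sum>l=1..n. share R p a k l j (load n z j)) = load n z j"
    if "is_GNE R p a k n m z" "\<forall>i\<in>{1..n}. typeI R p a k n m i z" for z
    using GNE_typeI_eq_share[OF fragile that(1) _ _ j] that(2) by simp
  have "load n x j = load n y j"
  proof (rule antimono_on_fixpoint_unique[OF share_sum_antimono[OF fragile j]])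
    show "load n x j \<in> {0<..}" "load n y j \<in> {0<..}"
      using GNE_typeI_load_pos[OF fragile _ _ \<open>n \<ge> 1\<close> j] assms(4-7) by auto
  qed (use fixpoint assms(4-7) in blast)+
  then show "x i j = y i j"
    using GNE_typeI_eq_share[OF fragile assms(4) _ i j] GNE_typeI_eq_share[OF fragile assms(6) _ i j]
      assms(5,7) i by simp
qed

end
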